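(* Let $L>0$ and $g\in L^2(0,L;\mathbb{C})$, and let $\tilde A^*$ be the operator on $L^2(0,L)$ with domain $\{z\in H^1(0,L):z(L)=z(0)\}$ defined by $\tilde A^*z(x)=-z'(x)+\int_0^L\overline{g(y)}z(y)dy$. For $\lambda\in\mathbb{C}$ let $w_\lambda(x)=\int_0^xe^{-\lambda(x-\sigma)}d\sigma$ (i.e. $(1-e^{-\lambda x})/\lambda$ if $\lambda\ne0$, $x$ if $\lambda=0$) and $$H(\lambda)=\begin{pmatrix}1-e^{-\lambda L}&-w_\lambda(L)\\ \int_0^L\overline{g(x)}e^{-\lambda x}dx&\int_0^L\overline{g(x)}w_\lambda(x)dx-1\end{pmatrix}.$$ Then: (1) for every $\lambda\in\mathbb{C}$, $\ker(\lambda-\tilde A^* )=\{ae^{-\lambda x}+bw_\lambda(x):(a,b)\in\mathbb{C}^2,\ H(\lambda)(a,b)^T=0\}$; (2) the spectrum of $\tilde A^*$ is $\{\lambda_k=\frac{2ik\pi}{L}:k\in\mathbb{Z},k\ne0\}\cup\{\lambda_0=\int_0^L\overline{g(x)}dx\}$. *)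

theory Defs
  imports "HOL-Analysis.Analysis"
begin

text \<open>Functions on the interval [0,L] are represented as functions real => complex;
  only their values on [0,L] matter.  Measure: Lebesgue measure.\<close>

definition L2_on :: "real \<Rightarrow> (real \<Rightarrow> complex) \<Rightarrow> bool" where
  "L2_on L f \<longleftrightarrow> set_borel_measurable lebesgue {0..L} f \<and>
     set_integrable lebesgue {0..L} (\<lambda>x. (cmod (f x))^2)"

definition L2_norm_on :: "real \<Rightarrow> (real \<Rightarrow> complex) \<Rightarrow> real" where
  "L2_norm_on L f = sqrt (LINT x:{0..L}|lebesgue. (cmod (f x))^2)"

text \<open>z (the absolutely continuous representative) belongs to H^1(0,L) with weak derivative z'.\<close>
definition H1_deriv :: "real \<Rightarrow> (real \<Rightarrow> complex) \<Rightarrow> (real \<Rightarrow> complex) \<Rightarrow> bool" where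
  "H1_deriv L z z' \<longleftrightarrow> L2_on L z' \<and>
     (\<forall>x\<in>{0..L}. z x = z 0 + (LINT t:{0..x}|lebesgue. z' t))"

definition dom_A :: "real \<Rightarrow> (real \<Rightarrow> complex) \<Rightarrow> bool" where
  "dom_A L z \<longleftrightarrow> (\<exists>z'. H1_deriv L z z') \<and> z L = z 0"

definition gint :: "real \<Rightarrow> (real \<Rightarrow> complex) \<Rightarrow> (real \<Rightarrow> complex) \<Rightarrow> complex" where
  "gint L g z = (LINT y:{0..L}|lebesgue. cnj (g y) * z y)"

definition shifted_eq :: "real \<Rightarrow> (real \<Rightarrow> complex) \<Rightarrow> complex \<Rightarrow> (real \<Rightarrow> complex) \<Rightarrow> (real \<Rightarrow> complex) \<Rightarrow> bool" where
  "shifted_eq L g mu z f \<longleftrightarrow> dom_A L z \<and>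
     (\<exists>z'. H1_deriv L z z' \<and>
        (AE x in lebesgue. x \<in> {0..L} \<longrightarrow> mu * z x - (- z' x + gint L g z) = f x))"

definition in_resolvent :: "real \<Rightarrow> (real \<Rightarrow> complex) \<Rightarrow> complex \<Rightarrow> bool" where
  "in_resolvent L g mu \<longleftrightarrow>
     (\<forall>f. L2_on L f \<longrightarrow> (\<exists>z. shifted_eq L g mu z f)) \<and>
     (\<forall>z. shifted_eq L g mu z (\<lambda>_. 0) \<longrightarrow> (\<forall>x\<in>{0..L}. z x = 0)) \<and>
     (\<exists>C. \<forall>z f. L2_on L f \<longrightarrow> shifted_eq L g mu z f \<longrightarrow> L2_norm_on L z \<le> C * L2_norm_on L f)"

definition spectrum_A :: "real \<Rightarrow> (real \<Rightarrow> complex) \<Rightarrow> complex set" where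
  "spectrum_A L g = {mu. \<not> in_resolvent L g mu}"

definition w_fun :: "complex \<Rightarrow> real \<Rightarrow> complex" where
  "w_fun mu x = (if mu = 0 then complex_of_real x else (1 - exp (- mu * complex_of_real x)) / mu)"

definition H_mat :: "real \<Rightarrow> (real \<Rightarrow> complex) \<Rightarrow> complex \<Rightarrow> complex^2^2" where
  "H_mat L g mu = vector [
     vector [1 - exp (- mu * complex_of_real L), - w_fun mu L],
     vector [gint L g (\<lambda>x. exp (- mu * complex_of_real x)), gint L g (w_fun mu) - 1]]"

end

theory Submission
  imports Defs
begin

text \<open>
  The equation \<open>(\<mu> - A) z = f\<close> says \<open>z' = f + c - \<mu> z\<close>, where the constant
  \<open>c = \<integral>\<^sub>0\<^sup>L conj(g) z\<close> is a priori unknown.  Variation of constants turns this into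
  \<open>z = a e\<^sub>\<mu> + c w\<^sub>\<mu> + F\<close> with \<open>e\<^sub>\<mu>(x) = exp(-\<mu> x)\<close>, \<open>a = z(0)\<close> and \<open>F\<close> the solution of
  \<open>F' = f - \<mu> F\<close>, \<open>F(0) = 0\<close>.  The two remaining conditions \<open>z(L) = z(0)\<close> and
  \<open>c = \<integral> conj(g) z\<close> are exactly the linear system \<open>H(\<mu>) (a, c) = (F(L), -\<integral> conj(g) F)\<close>.
  Hence the kernel is described by \<open>ker H(\<mu>)\<close>, and \<open>\<mu>\<close> lies in the resolvent set iff \<open>H(\<mu>)\<close>
  is invertible: then the solution is unique and bounded by \<open>\<parallel>f\<parallel>\<^sub>1 \<le> \<surd>L \<parallel>f\<parallel>\<^sub>2\<close>; otherwise
  a nonzero kernel vector gives a nonzero eigenfunction.  Finally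
  \<open>det H(\<mu>) = (1 - exp(-\<mu> L)) (\<integral> conj(g) - \<mu>) / \<mu>\<close> for \<open>\<mu> \<noteq> 0\<close> and \<open>L \<integral> conj(g)\<close> for \<open>\<mu> = 0\<close>.
\<close>

definition e_fun :: "complex \<Rightarrow> real \<Rightarrow> complex" where
  "e_fun mu x = exp (- mu * complex_of_real x)"

lemma has_vector_derivative_e_fun: "(e_fun mu has_vector_derivative - mu * e_fun mu x) (at x within S)"
proof -
  have "((\<lambda>z. exp (- mu * z)) has_field_derivative - mu * exp (- mu * complex_of_real x)) (at (complex_of_real x))"
    by (auto intro!: derivative_eq_intros)
  from has_vector_derivative_real_field[OF this] show ?thesis
    unfolding e_fun_def by simp
qed

lemma e_fun_eq: "e_fun mu x = 1 - mu * w_fun mu x"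
  by (simp add: e_fun_def w_fun_def)

lemma has_vector_derivative_w_fun: "(w_fun mu has_vector_derivative e_fun mu x) (at x within S)"
proof (cases "mu = 0")
  case True
  then show ?thesis
    unfolding w_fun_def e_fun_def by (auto intro!: derivative_eq_intros)
next
  case False
  have "((\<lambda>z. (1 - exp (- mu * z)) / mu) has_field_derivative e_fun mu x) (at (complex_of_real x))"
    using False unfolding e_fun_def by (auto intro!: derivative_eq_intros)
  from has_vector_derivative_real_field[OF this] show ?thesis
    using False unfolding w_fun_def by simp
qed

lemma continuous_on_e_fun: "continuous_on S (e_fun mu)"
  unfolding e_fun_def by (intro continuous_intros)

lemma continuous_on_w_fun: "continuous_on S (w_fun mu)"
  by (rule continuous_on_vector_derivative[OF has_vector_derivative_w_fun])

lemma e_fun_0 [simp]: "e_fun mu 0 = 1"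
  and w_fun_0 [simp]: "w_fun mu 0 = 0"
  by (simp_all add: e_fun_def w_fun_def)

lemma e_fun_uminus_mult: "e_fun (- mu) x * e_fun mu x = 1"
  by (simp add: e_fun_def exp_add[symmetric])

lemma e_fun_nonzero: "e_fun mu x \<noteq> 0"
  by (simp add: e_fun_def)

section \<open>Square integrable functions on \<open>[0,L]\<close>\<close>

lemma set_borel_measurable_iff_lebesgue_on:
  fixes f :: "real \<Rightarrow> 'b::real_normed_vector"
  assumes "S \<in> sets lebesgue"
  shows "set_borel_measurable lebesgue S f \<longleftrightarrow> f \<in> borel_measurable (lebesgue_on S)"
  unfolding set_borel_measurable_def using assms
  by (subst borel_measurable_restrict_space_iff) auto

lemma L2_on_imp_absolutely_integrable:
  assumes "L2_on L f"
  shows "f absolutely_integrable_on {0..L}"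
proof (rule measurable_bounded_by_integrable_imp_absolutely_integrable)
  show "f \<in> borel_measurable (lebesgue_on {0..L})"
    using assms set_borel_measurable_iff_lebesgue_on[of "{0..L}" f] unfolding L2_on_def by simp
  have "(\<lambda>x. (cmod (f x))^2) integrable_on {0..L}"
    using assms set_lebesgue_integral_eq_integral(1) unfolding L2_on_def by blast
  then show "(\<lambda>x. 1 + (cmod (f x))^2) integrable_on {0..L}"
    by (intro integrable_add) auto
  show "norm (f x) \<le> 1 + (cmod (f x))^2" for x
    using sum_squares_bound[of "cmod (f x)" "1/2"] by (simp add: power2_eq_square algebra_simps)
qed (simp)

lemma L2_on_zero: "L2_on L (\<lambda>_. 0)"
  by (simp add: L2_on_def set_integrable_def set_borel_measurable_def)

lemma L2_on_add_continuous:
  assumes f: "L2_on L f" and h: "continuous_on {0..L} h"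
  shows "L2_on L (\<lambda>x. f x + h x)"
proof -
  have "f \<in> borel_measurable (lebesgue_on {0..L})"
    using f set_borel_measurable_iff_lebesgue_on[of "{0..L}" f] unfolding L2_on_def by simp
  moreover have "h \<in> borel_measurable (lebesgue_on {0..L})"
    using continuous_imp_measurable_on_sets_lebesgue[OF h] by simp
  ultimately have meas: "(\<lambda>x. f x + h x) \<in> borel_measurable (lebesgue_on {0..L})"
    by (rule borel_measurable_add)
  have "(\<lambda>x. (cmod (f x))^2) integrable_on {0..L}"
    using f set_lebesgue_integral_eq_integral(1) unfolding L2_on_def by blast
  moreover have "(\<lambda>x. (cmod (h x))^2) integrable_on {0..L}"
    by (intro integrable_continuous_real continuous_intros h)
  ultimately have "(\<lambda>x. 2 * (cmod (f x))^2 + 2 * (cmod (h x))^2) integrable_on {0..L}"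
    by (intro integrable_add integrable_on_mult_right)
  moreover have "(cmod (f x + h x))^2 \<le> 2 * (cmod (f x))^2 + 2 * (cmod (h x))^2" for x
  proof -
    have "(cmod (f x + h x))^2 \<le> (cmod (f x) + cmod (h x))^2"
      by (simp add: norm_triangle_ineq power_mono)
    also have "\<dots> \<le> 2 * (cmod (f x))^2 + 2 * (cmod (h x))^2"
      using sum_squares_bound[of "cmod (f x)" "cmod (h x)"] by (simp add: power2_eq_square algebra_simps)
    finally show ?thesis .
  qed
  ultimately have "set_integrable lebesgue {0..L} (\<lambda>x. (cmod (f x + h x))^2)"
    by (intro measurable_bounded_by_integrable_imp_absolutely_integrable[where g = "\<lambda>x. 2 * (cmod (f x))^2 + 2 * (cmod (h x))^2"])
      (use meas in \<open>auto intro: borel_measurable_power borel_measurable_norm\<close>)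
  with meas show ?thesis
    unfolding L2_on_def by (simp add: set_borel_measurable_iff_lebesgue_on)
qed

lemma integral_norm_le_sqrt_mult_L2_norm:
  assumes L: "L > 0" and f: "L2_on L f"
  shows "integral {0..L} (\<lambda>t. cmod (f t)) \<le> sqrt L * L2_norm_on L f"
proof -
  have i1: "(\<lambda>t. cmod (f t)) integrable_on {0..L}"
    using L2_on_imp_absolutely_integrable[OF f] absolutely_integrable_on_def by blast
  have s2: "set_integrable lebesgue {0..L} (\<lambda>t. (cmod (f t))^2)"
    using f unfolding L2_on_def by blast
  have i2: "(\<lambda>t. (cmod (f t))^2) integrable_on {0..L}"
    by (rule set_lebesgue_integral_eq_integral(1)[OF s2])
  define N where "N = integral {0..L} (\<lambda>t. cmod (f t))"
  define Q where "Q = integral {0..L} (\<lambda>t. (cmod (f t))^2)"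
  define m where "m = N / L"
  have N0: "N \<ge> 0"
    unfolding N_def by (rule integral_nonneg[OF i1]) auto
  \<comment> \<open>Cauchy-Schwarz: the variance of \<open>|f|\<close> about its mean \<open>m\<close> is nonnegative.\<close>
  define h where "h t = (cmod (f t))^2 - 2 * m * cmod (f t) + m^2" for t
  have h_square: "h t = (cmod (f t) - m)^2" for t
    by (simp add: h_def power2_diff algebra_simps)
  have "h integrable_on {0..L}"
    unfolding h_def by (intro integrable_add integrable_diff integrable_on_mult_right i1 i2 integrable_const_ivl)
  then have "0 \<le> integral {0..L} h"
    by (rule integral_nonneg) (simp add: h_square)
  also have "integral {0..L} h = Q - 2 * m * N + m^2 * L"
    using L unfolding h_def Q_def N_def
      integral_add[OF integrable_diff[OF i2 integrable_on_mult_right[OF i1]] integrable_const_ivl]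
      integral_diff[OF i2 integrable_on_mult_right[OF i1]] integral_mult_right
    by simp
  also have "\<dots> = Q - N^2 / L"
    using L by (simp add: m_def field_simps power2_eq_square)
  finally have "N^2 \<le> L * Q"
    using L by (simp add: field_simps)
  then have "N \<le> sqrt (L * Q)"
    using N0 by (simp add: real_le_rsqrt)
  moreover have "L2_norm_on L f = sqrt Q"
    unfolding L2_norm_on_def Q_def using set_lebesgue_integral_eq_integral(2)[OF s2] by simp
  ultimately show ?thesis
    unfolding N_def by (simp add: real_sqrt_mult)
qed

lemma L2_norm_on_le_sup:
  assumes L: "L \<ge> 0" and B: "\<forall>x\<in>{0..L}. cmod (z x) \<le> B"
  shows "L2_norm_on L z \<le> sqrt L * B"
proof -
  have B0: "B \<ge> 0"
    using B L by (meson atLeastAtMost_iff norm_ge_zero order.refl order_trans)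
  have "(LINT x:{0..L}|lebesgue. (cmod (z x))^2) \<le> L * B^2"
  proof (cases "set_integrable lebesgue {0..L} (\<lambda>x. (cmod (z x))^2)")
    case True
    have "(LINT x:{0..L}|lebesgue. (cmod (z x))^2) = integral {0..L} (\<lambda>x. (cmod (z x))^2)"
      by (rule set_lebesgue_integral_eq_integral(2)[OF True])
    also have "\<dots> \<le> integral {0..L} (\<lambda>x. B^2)"
      using B by (intro integral_le set_lebesgue_integral_eq_integral(1)[OF True])
        (auto simp: power_mono)
    finally show ?thesis
      using L by simp
  next
    case False
    then have "(LINT x:{0..L}|lebesgue. (cmod (z x))^2) = 0"
      unfolding set_lebesgue_integral_def set_integrable_def by (rule not_integrable_integral_eq)
    then show ?thesis
      using L by simp
  qed
  then have "L2_norm_on L z \<le> sqrt (L * B^2)"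
    unfolding L2_norm_on_def by (rule real_sqrt_le_mono)
  also have "\<dots> = sqrt L * B"
    using B0 by (simp add: real_sqrt_mult)
  finally show ?thesis .
qed

lemma cnj_mult_absolutely_integrable:
  assumes g: "L2_on L g" and h: "continuous_on {0..L} h"
  shows "(\<lambda>y. cnj (g y) * h y) absolutely_integrable_on {0..L}"
proof -
  have "g absolutely_integrable_on {0..L}"
    using L2_on_imp_absolutely_integrable[OF g] .
  then have "(\<lambda>y. cnj (g y)) absolutely_integrable_on {0..L}"
    unfolding set_integrable_def
    using complex_integrable_cnj[of lebesgue "\<lambda>x. indicator {0..L} x *\<^sub>R g x"] by simp
  then have "(\<lambda>y. h y * cnj (g y)) absolutely_integrable_on {0..L}"
    by (intro absolutely_integrable_bounded_measurable_product[OF bilinear_times])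
      (auto intro: continuous_imp_measurable_on_sets_lebesgue h compact_imp_bounded compact_continuous_image)
  then show ?thesis
    by (simp add: mult.commute)
qed

lemma gint_add:
  assumes "L2_on L g" "continuous_on {0..L} h1" "continuous_on {0..L} h2"
  shows "gint L g (\<lambda>x. h1 x + h2 x) = gint L g h1 + gint L g h2"
  using set_integral_add(2)[OF assms(2,3)[THEN cnj_mult_absolutely_integrable[OF assms(1)]]]
  unfolding gint_def by (simp add: distrib_left)

lemma gint_mult: "gint L g (\<lambda>x. a * h x) = a * gint L g h"
  unfolding gint_def by (simp add: mult.left_commute)

lemma gint_cong: "(\<And>x. x \<in> {0..L} \<Longrightarrow> h1 x = h2 x) \<Longrightarrow> gint L g h1 = gint L g h2"
  unfolding gint_def by (rule set_lebesgue_integral_cong) auto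

lemma norm_gint_le:
  assumes g: "L2_on L g" and h: "continuous_on {0..L} h" and M: "\<forall>x\<in>{0..L}. cmod (h x) \<le> M"
  shows "cmod (gint L g h) \<le> M * integral {0..L} (\<lambda>t. cmod (g t))"
proof -
  have gh: "(\<lambda>y. cnj (g y) * h y) absolutely_integrable_on {0..L}"
    by (rule cnj_mult_absolutely_integrable[OF g h])
  have "(\<lambda>t. cmod (g t)) integrable_on {0..L}"
    using L2_on_imp_absolutely_integrable[OF g] absolutely_integrable_on_def by blast
  then have Mg: "(\<lambda>t. M * cmod (g t)) integrable_on {0..L}"
    by (rule integrable_on_mult_right)
  have "cmod (gint L g h) = cmod (integral {0..L} (\<lambda>y. cnj (g y) * h y))"
    unfolding gint_def by (simp add: set_lebesgue_integral_eq_integral(2)[OF gh])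
  also have "\<dots> \<le> integral {0..L} (\<lambda>t. M * cmod (g t))"
    using M set_lebesgue_integral_eq_integral(1)[OF gh] Mg
    by (intro integral_norm_bound_integral) (auto simp: norm_mult mult.commute[of M] intro: mult_left_mono)
  finally show ?thesis
    by simp
qed

section \<open>Variation of constants\<close>

definition prim :: "(real \<Rightarrow> complex) \<Rightarrow> real \<Rightarrow> complex" where
  "prim f x = integral {0..x} f"

lemma continuous_on_prim:
  "f absolutely_integrable_on {0..L} \<Longrightarrow> continuous_on {0..L} (prim f)"
  unfolding prim_def
  by (rule indefinite_integral_continuous_1) (rule set_lebesgue_integral_eq_integral(1))

lemma norm_prim_le:
  assumes f: "f absolutely_integrable_on {0..L}" and x: "x \<in> {0..L}"
  shows "cmod (prim f x) \<le> integral {0..L} (\<lambda>t. cmod (f t))"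
proof -
  have fx: "f absolutely_integrable_on {0..x}"
    using absolutely_integrable_on_subinterval[OF f] x by auto
  have "cmod (prim f x) \<le> integral {0..x} (\<lambda>t. cmod (f t))"
    unfolding prim_def using fx absolutely_integrable_on_def
    by (intro integral_norm_bound_integral) auto
  also have "\<dots> \<le> integral {0..L} (\<lambda>t. cmod (f t))"
    using x fx f absolutely_integrable_on_def by (intro integral_subset_le) auto
  finally show ?thesis .
qed

lemma norm_e_fun_le:
  assumes "x \<in> {0..L}"
  shows "cmod (e_fun mu x) \<le> exp (cmod mu * L)"
proof -
  have "- Re mu * x \<le> cmod mu * x"
    using assms abs_Re_le_cmod[of mu] by (intro mult_right_mono) auto
  also have "\<dots> \<le> cmod mu * L"
    using assms by (intro mult_left_mono) auto
  finally show ?thesis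
    by (simp add: e_fun_def)
qed

text \<open>\<open>vc_sol mu f\<close> solves \<open>y' = f - mu y\<close>, \<open>y(0) = 0\<close>.  It is
  \<open>\<integral>\<^sub>0\<^sup>x exp(-mu (x - s)) f(s) ds\<close> after an integration by parts, so that only the
  continuous primitive of \<open>f\<close> is integrated.\<close>

definition vc_tail :: "complex \<Rightarrow> (real \<Rightarrow> complex) \<Rightarrow> real \<Rightarrow> complex" where
  "vc_tail mu f x = - mu * e_fun mu x * integral {0..x} (\<lambda>s. e_fun (- mu) s * prim f s)"

definition vc_sol :: "complex \<Rightarrow> (real \<Rightarrow> complex) \<Rightarrow> real \<Rightarrow> complex" where
  "vc_sol mu f x = prim f x + vc_tail mu f x"

lemma has_vector_derivative_vc_tail:
  assumes f: "f absolutely_integrable_on {0..L}" and x: "x \<in> {0..L}"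
  shows "(vc_tail mu f has_vector_derivative - mu * vc_sol mu f x) (at x within {0..L})"
proof -
  define I where "I y = integral {0..y} (\<lambda>s. e_fun (- mu) s * prim f s)" for y
  have "continuous_on {0..L} (\<lambda>s. e_fun (- mu) s * prim f s)"
    by (intro continuous_intros continuous_on_e_fun continuous_on_prim f)
  then have "(I has_vector_derivative e_fun (- mu) x * prim f x) (at x within {0..L})"
    unfolding I_def by (rule integral_has_vector_derivative[OF _ x])
  then have D: "((\<lambda>y. - mu * (e_fun mu y * I y)) has_vector_derivative
      - mu * (e_fun mu x * (e_fun (- mu) x * prim f x) + (- mu * e_fun mu x) * I x)) (at x within {0..L})"
    by (intro has_vector_derivative_mult_right has_vector_derivative_mult has_vector_derivative_e_fun)
  have "- mu * (e_fun mu x * (e_fun (- mu) x * prim f x) + (- mu * e_fun mu x) * I x)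
      = - mu * vc_sol mu f x"
    using e_fun_uminus_mult[of mu x] unfolding vc_sol_def vc_tail_def I_def by (simp add: algebra_simps)
  moreover have "vc_tail mu f = (\<lambda>y. - mu * (e_fun mu y * I y))"
    by (simp add: fun_eq_iff vc_tail_def I_def)
  ultimately show ?thesis
    using D by (simp only:)
qed

lemma continuous_on_vc_sol:
  assumes "f absolutely_integrable_on {0..L}"
  shows "continuous_on {0..L} (vc_sol mu f)"
proof -
  have "continuous_on {0..L} (vc_tail mu f)"
    using has_vector_derivative_vc_tail[OF assms] by (intro continuous_on_vector_derivative) auto
  then show ?thesis
    unfolding vc_sol_def[abs_def] by (intro continuous_intros continuous_on_prim assms)
qed

lemma vc_sol_at_0 [simp]: "vc_sol mu f 0 = 0"
  by (simp add: vc_sol_def vc_tail_def prim_def)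

lemma vc_sol_zero [simp]: "vc_sol mu (\<lambda>_. 0) = (\<lambda>_. 0)"
  by (simp add: vc_sol_def vc_tail_def prim_def fun_eq_iff)

lemma norm_vc_sol_le:
  assumes f: "f absolutely_integrable_on {0..L}" and x: "x \<in> {0..L}"
  shows "cmod (vc_sol mu f x) \<le> (1 + cmod mu * exp (2 * cmod mu * L) * L) * integral {0..L} (\<lambda>t. cmod (f t))"
proof -
  define N where "N = integral {0..L} (\<lambda>t. cmod (f t))"
  define E where "E = exp (cmod mu * L)"
  have N: "cmod (prim f y) \<le> N" if "y \<in> {0..L}" for y
    unfolding N_def by (rule norm_prim_le[OF f that])
  have N0: "0 \<le> N"
    using order_trans[OF norm_ge_zero N[of 0]] x by simp
  have "cmod (e_fun (- mu) s * prim f s) \<le> E * N" if "s \<in> {0..x}" for s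
    unfolding norm_mult E_def
    using that x norm_e_fun_le[of s L "- mu"] N[of s] by (intro mult_mono) auto
  then have "cmod (integral {0..x} (\<lambda>s. e_fun (- mu) s * prim f s)) \<le> E * N * (x - 0)"
    using x continuous_on_subset[OF continuous_on_prim[OF f], of "{0..x}"]
    by (intro integral_bound) (auto intro!: continuous_on_mult continuous_on_e_fun)
  also have "\<dots> \<le> E * N * L"
    using x N0 by (intro mult_left_mono) (auto simp: E_def)
  finally have "cmod (vc_tail mu f x) \<le> cmod mu * E * (E * N * L)"
    unfolding vc_tail_def norm_mult norm_minus_cancel
    using x norm_e_fun_le[of x L mu] by (intro mult_mono mult_left_mono) (auto simp: E_def)
  then have "cmod (vc_sol mu f x) \<le> N + cmod mu * E * (E * N * L)"
    unfolding vc_sol_def using N[OF x] norm_triangle_ineq[of "prim f x" "vc_tail mu f x"] by linarith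
  also have "\<dots> = (1 + cmod mu * exp (2 * cmod mu * L) * L) * N"
    unfolding E_def by (simp add: algebra_simps mult_exp_exp)
  finally show ?thesis
    unfolding N_def .
qed

lemma linear_ode_zero_initial:
  fixes u :: "real \<Rightarrow> complex"
  assumes u: "\<And>x. x \<in> {0..L} \<Longrightarrow> (u has_vector_derivative - mu * u x) (at x within {0..L})"
    and "u 0 = 0" and x: "x \<in> {0..L}"
  shows "u x = 0"
proof -
  have "((\<lambda>y. e_fun (- mu) y * u y) has_vector_derivative 0) (at y within {0..L})" if "y \<in> {0..L}" for y
    using has_vector_derivative_mult[OF has_vector_derivative_e_fun[of "- mu" y] u[OF that]]
    by (simp add: algebra_simps)
  then obtain k where "\<And>y. y \<in> {0..L} \<Longrightarrow> e_fun (- mu) y * u y = k"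
    using has_vector_derivative_zero_constant[of "{0..L}" "\<lambda>y. e_fun (- mu) y * u y"] by auto
  from this[of x] this[of 0] x \<open>u 0 = 0\<close> show ?thesis
    by (simp add: e_fun_nonzero)
qed

lemma has_vector_derivative_vc_form:
  assumes f: "f absolutely_integrable_on {0..L}" and x: "x \<in> {0..L}"
  shows "((\<lambda>y. a * e_fun mu y + c * w_fun mu y + vc_tail mu f y) has_vector_derivative
      c - mu * (a * e_fun mu x + c * w_fun mu x + vc_sol mu f x)) (at x within {0..L})"
proof -
  have "((\<lambda>y. a * e_fun mu y + c * w_fun mu y + vc_tail mu f y) has_vector_derivative
      a * (- mu * e_fun mu x) + c * e_fun mu x + - mu * vc_sol mu f x) (at x within {0..L})"
    by (intro has_vector_derivative_add has_vector_derivative_mult_right has_vector_derivative_e_fun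
        has_vector_derivative_w_fun has_vector_derivative_vc_tail f x)
  moreover have "a * (- mu * e_fun mu x) + c * e_fun mu x + - mu * vc_sol mu f x
      = c - mu * (a * e_fun mu x + c * w_fun mu x + vc_sol mu f x)"
    by (subst (2) e_fun_eq) (simp add: algebra_simps)
  ultimately show ?thesis
    by simp
qed

lemma integral_eq_iff_vc_form:
  assumes f: "f absolutely_integrable_on {0..L}" and z: "continuous_on {0..L} z"
  shows "(\<forall>x\<in>{0..L}. z x = a + prim f x + integral {0..x} (\<lambda>t. c - mu * z t)) \<longleftrightarrow>
    (\<forall>x\<in>{0..L}. z x = a * e_fun mu x + c * w_fun mu x + vc_sol mu f x)"
proof -
  define v where "v x = a * e_fun mu x + c * w_fun mu x + vc_sol mu f x" for x
  have v: "v x = a + prim f x + integral {0..x} (\<lambda>t. c - mu * v t)" if x: "x \<in> {0..L}" for x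
  proof -
    have "integral {0..x} (\<lambda>t. c - mu * v t) = (v x - prim f x) - (v 0 - prim f 0)"
    proof (intro integral_unique fundamental_theorem_of_calculus)
      show "((\<lambda>y. v y - prim f y) has_vector_derivative c - mu * v t) (at t within {0..x})"
        if "t \<in> {0..x}" for t
      proof -
        have "(\<lambda>y. v y - prim f y) = (\<lambda>y. a * e_fun mu y + c * w_fun mu y + vc_tail mu f y)"
          by (simp add: fun_eq_iff v_def vc_sol_def)
        with that x show ?thesis
          using has_vector_derivative_vc_form[OF f, where a = a and c = c and mu = mu and x = t]
          by (auto simp: v_def intro: has_vector_derivative_within_subset)
      qed
    qed (use x in auto)
    then show ?thesis
      by (simp add: v_def prim_def)
  qed
  have cont_v: "continuous_on {0..L} v"
    unfolding v_def[abs_def]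
    by (intro continuous_intros continuous_on_e_fun continuous_on_w_fun continuous_on_vc_sol f)
  show ?thesis
  proof
    assume eq: "\<forall>x\<in>{0..L}. z x = a + prim f x + integral {0..x} (\<lambda>t. c - mu * z t)"
    define u where "u y = integral {0..y} (\<lambda>t. - mu * (z t - v t))" for y
    have zv: "z x - v x = u x" if "x \<in> {0..L}" for x
    proof -
      have "integral {0..x} (\<lambda>t. c - mu * z t) - integral {0..x} (\<lambda>t. c - mu * v t) = u x"
        unfolding u_def using that
        by (subst integral_diff[symmetric])
          (auto simp: algebra_simps intro!: integrable_continuous_interval continuous_intros
            continuous_on_subset[OF z] continuous_on_subset[OF cont_v])
      then show ?thesis
        using eq v that by simp
    qed
    have cont: "continuous_on {0..L} (\<lambda>t. - mu * (z t - v t))"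
      by (intro continuous_intros z cont_v)
    have "u x = 0" if x: "x \<in> {0..L}" for x
    proof (rule linear_ode_zero_initial[OF _ _ x])
      show "(u has_vector_derivative - mu * u y) (at y within {0..L})" if "y \<in> {0..L}" for y
      proof -
        have "(u has_vector_derivative - mu * (z y - v y)) (at y within {0..L})"
          unfolding u_def by (rule integral_has_vector_derivative[OF cont that])
        then show ?thesis
          using zv[OF that] by simp
      qed
    qed (simp add: u_def)
    then show "\<forall>x\<in>{0..L}. z x = a * e_fun mu x + c * w_fun mu x + vc_sol mu f x"
      using zv by (simp add: v_def)
  next
    assume "\<forall>x\<in>{0..L}. z x = a * e_fun mu x + c * w_fun mu x + vc_sol mu f x"
    then have "\<forall>x\<in>{0..L}. z x = v x"
      by (simp add: v_def)
    moreover have "integral {0..x} (\<lambda>t. c - mu * z t) = integral {0..x} (\<lambda>t. c - mu * v t)"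
      if "x \<in> {0..L}" for x
      using calculation that by (intro integral_cong) auto
    ultimately show "\<forall>x\<in>{0..L}. z x = a + prim f x + integral {0..x} (\<lambda>t. c - mu * z t)"
      using v by simp
  qed
qed

section \<open>The resolvent equation as a linear system\<close>

lemma set_integral_ae_eq_add_continuous:
  assumes h: "h absolutely_integrable_on {0..L}" and f: "f absolutely_integrable_on {0..L}"
    and k: "continuous_on {0..L} k" and ae: "AE t in lebesgue. t \<in> {0..L} \<longrightarrow> h t = f t + k t"
    and x: "x \<in> {0..L}"
  shows "(LINT t:{0..x}|lebesgue. h t) = prim f x + integral {0..x} k"
proof -
  have hx: "h absolutely_integrable_on {0..x}" and fx: "f absolutely_integrable_on {0..x}"
    using absolutely_integrable_on_subinterval[OF h] absolutely_integrable_on_subinterval[OF f] x by auto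
  have kx: "k absolutely_integrable_on {0..x}"
    by (rule absolutely_integrable_continuous_real, rule continuous_on_subset[OF k]) (use x in auto)
  have "(LINT t:{0..x}|lebesgue. h t) = (LINT t:{0..x}|lebesgue. f t + k t)"
    unfolding set_lebesgue_integral_def
  proof (rule integral_cong_AE)
    show "(\<lambda>t. indicat_real {0..x} t *\<^sub>R h t) \<in> borel_measurable lebesgue"
      using hx unfolding set_integrable_def by (rule borel_measurable_integrable)
    show "(\<lambda>t. indicat_real {0..x} t *\<^sub>R (f t + k t)) \<in> borel_measurable lebesgue"
      using set_integral_add(1)[OF fx kx] unfolding set_integrable_def by (rule borel_measurable_integrable)
    show "AE t in lebesgue. indicat_real {0..x} t *\<^sub>R h t = indicat_real {0..x} t *\<^sub>R (f t + k t)"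
      using ae by eventually_elim (use x in \<open>auto simp: indicator_def\<close>)
  qed
  also have "\<dots> = prim f x + integral {0..x} k"
    unfolding set_integral_add(2)[OF fx kx] prim_def
    by (simp add: set_lebesgue_integral_eq_integral(2)[OF fx] set_lebesgue_integral_eq_integral(2)[OF kx])
  finally show ?thesis .
qed

lemma shifted_eq_iff_integral_eq:
  assumes f: "L2_on L f"
  shows "shifted_eq L g mu z f \<longleftrightarrow> z L = z 0 \<and> continuous_on {0..L} z \<and>
    (\<forall>x\<in>{0..L}. z x = z 0 + prim f x + integral {0..x} (\<lambda>t. gint L g z - mu * z t))"
    (is "_ \<longleftrightarrow> _ \<and> _ \<and> (\<forall>x\<in>{0..L}. z x = z 0 + prim f x + integral {0..x} ?k)")
proof
  have fa: "f absolutely_integrable_on {0..L}"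
    by (rule L2_on_imp_absolutely_integrable[OF f])
  assume "shifted_eq L g mu z f"
  then obtain z' where zL: "z L = z 0" and z'L2: "L2_on L z'"
    and z: "\<And>x. x \<in> {0..L} \<Longrightarrow> z x = z 0 + (LINT t:{0..x}|lebesgue. z' t)"
    and ae: "AE x in lebesgue. x \<in> {0..L} \<longrightarrow> mu * z x - (- z' x + gint L g z) = f x"
    unfolding shifted_eq_def dom_A_def H1_deriv_def by blast
  have z'a: "z' absolutely_integrable_on {0..L}"
    by (rule L2_on_imp_absolutely_integrable[OF z'L2])
  have "z x = z 0 + integral {0..x} z'" if "x \<in> {0..L}" for x
    using z[OF that] set_lebesgue_integral_eq_integral(2)[OF absolutely_integrable_on_subinterval[OF z'a]] that
    by simp
  moreover have "continuous_on {0..L} (\<lambda>x. z 0 + integral {0..x} z')"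
    by (intro continuous_intros indefinite_integral_continuous_1 set_lebesgue_integral_eq_integral(1)[OF z'a])
  ultimately have cont: "continuous_on {0..L} z"
    using continuous_on_cong by (metis (no_types, lifting))
  have "AE t in lebesgue. t \<in> {0..L} \<longrightarrow> z' t = f t + ?k t"
    using ae by eventually_elim (auto simp: algebra_simps)
  then have "z x = z 0 + prim f x + integral {0..x} ?k" if "x \<in> {0..L}" for x
    using z[OF that] set_integral_ae_eq_add_continuous[OF z'a fa _ _ that] cont
    by (simp add: continuous_intros)
  with zL cont show "z L = z 0 \<and> continuous_on {0..L} z \<and>
      (\<forall>x\<in>{0..L}. z x = z 0 + prim f x + integral {0..x} ?k)"
    by blast
next
  assume "z L = z 0 \<and> continuous_on {0..L} z \<and> (\<forall>x\<in>{0..L}. z x = z 0 + prim f x + integral {0..x} ?k)"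
  then have zL: "z L = z 0" and cont: "continuous_on {0..L} z"
    and z: "\<And>x. x \<in> {0..L} \<Longrightarrow> z x = z 0 + prim f x + integral {0..x} ?k"
    by blast+
  have fa: "f absolutely_integrable_on {0..L}"
    by (rule L2_on_imp_absolutely_integrable[OF f])
  have k: "continuous_on {0..L} ?k"
    by (intro continuous_intros cont)
  have fk: "(\<lambda>t. f t + ?k t) absolutely_integrable_on {0..L}"
    by (intro set_integral_add(1) fa absolutely_integrable_continuous_real k)
  have "z x = z 0 + (LINT t:{0..x}|lebesgue. f t + ?k t)" if "x \<in> {0..L}" for x
    using z[OF that] set_integral_ae_eq_add_continuous[OF fk fa k _ that]
    by (simp add: add.assoc)
  then have "H1_deriv L z (\<lambda>t. f t + ?k t)"
    unfolding H1_deriv_def using L2_on_add_continuous[OF f k] by blast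
  then show "shifted_eq L g mu z f"
    unfolding shifted_eq_def dom_A_def using zL by (auto simp: algebra_simps)
qed

lemma H_mat_mult_eq_vector:
  "H_mat L g mu *v v = vector [p, q] \<longleftrightarrow>
    (1 - e_fun mu L) * v$1 - w_fun mu L * v$2 = p \<and>
    gint L g (e_fun mu) * v$1 + (gint L g (w_fun mu) - 1) * v$2 = q"
  unfolding H_mat_def e_fun_def[abs_def]
  by (simp add: vec_eq_iff forall_2 matrix_vector_mult_def sum_2)

lemma vc_form_boundary_conditions_iff:
  assumes L: "0 \<le> L" and g: "L2_on L g" and f: "f absolutely_integrable_on {0..L}"
    and z: "\<forall>x\<in>{0..L}. z x = v$1 * e_fun mu x + v$2 * w_fun mu x + vc_sol mu f x"
  shows "H_mat L g mu *v v = vector [vc_sol mu f L, - gint L g (vc_sol mu f)] \<longleftrightarrow>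
    z L = z 0 \<and> gint L g z = v$2"
proof -
  have "gint L g z = gint L g (\<lambda>x. v$1 * e_fun mu x + v$2 * w_fun mu x + vc_sol mu f x)"
    using z by (intro gint_cong) auto
  also have "\<dots> = v$1 * gint L g (e_fun mu) + v$2 * gint L g (w_fun mu) + gint L g (vc_sol mu f)"
    by (simp add: gint_add[OF g] gint_mult continuous_intros continuous_on_e_fun continuous_on_w_fun
        continuous_on_vc_sol[OF f])
  finally have "gint L g z = \<dots>" .
  moreover have "z 0 = v$1" and "z L = v$1 * e_fun mu L + v$2 * w_fun mu L + vc_sol mu f L"
    using z L by auto
  ultimately show ?thesis
    unfolding H_mat_mult_eq_vector by (auto simp: algebra_simps)
qed

lemma shifted_eq_iff:
  assumes L: "L > 0" and g: "L2_on L g" and f: "L2_on L f"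
  shows "shifted_eq L g mu z f \<longleftrightarrow>
    (\<exists>v. H_mat L g mu *v v = vector [vc_sol mu f L, - gint L g (vc_sol mu f)] \<and>
      (\<forall>x\<in>{0..L}. z x = v$1 * e_fun mu x + v$2 * w_fun mu x + vc_sol mu f x))"
proof
  have fa: "f absolutely_integrable_on {0..L}"
    by (rule L2_on_imp_absolutely_integrable[OF f])
  assume "shifted_eq L g mu z f"
  then have zL: "z L = z 0" and cont: "continuous_on {0..L} z"
    and integral_eq: "\<forall>x\<in>{0..L}. z x = z 0 + prim f x + integral {0..x} (\<lambda>t. gint L g z - mu * z t)"
    unfolding shifted_eq_iff_integral_eq[OF f] by blast+
  define v :: "complex^2" where "v = vector [z 0, gint L g z]"
  have v1: "v$1 = z 0" and v2: "v$2 = gint L g z"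
    by (simp_all add: v_def)
  have zv: "\<forall>x\<in>{0..L}. z x = v$1 * e_fun mu x + v$2 * w_fun mu x + vc_sol mu f x"
    using integral_eq unfolding integral_eq_iff_vc_form[OF fa cont] v1 v2 .
  moreover have "H_mat L g mu *v v = vector [vc_sol mu f L, - gint L g (vc_sol mu f)]"
    using vc_form_boundary_conditions_iff[OF less_imp_le[OF L] g fa zv] zL v2 by simp
  ultimately show "\<exists>v. H_mat L g mu *v v = vector [vc_sol mu f L, - gint L g (vc_sol mu f)] \<and>
      (\<forall>x\<in>{0..L}. z x = v$1 * e_fun mu x + v$2 * w_fun mu x + vc_sol mu f x)"
    by blast
next
  have fa: "f absolutely_integrable_on {0..L}"
    by (rule L2_on_imp_absolutely_integrable[OF f])
  assume "\<exists>v. H_mat L g mu *v v = vector [vc_sol mu f L, - gint L g (vc_sol mu f)] \<and>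
      (\<forall>x\<in>{0..L}. z x = v$1 * e_fun mu x + v$2 * w_fun mu x + vc_sol mu f x)"
  then obtain v where H: "H_mat L g mu *v v = vector [vc_sol mu f L, - gint L g (vc_sol mu f)]"
    and z: "\<forall>x\<in>{0..L}. z x = v$1 * e_fun mu x + v$2 * w_fun mu x + vc_sol mu f x"
    by blast
  have zL: "z L = z 0" and c: "gint L g z = v$2"
    using vc_form_boundary_conditions_iff[OF less_imp_le[OF L] g fa z] H by auto
  have z0: "z 0 = v$1"
    using z L by auto
  have "continuous_on {0..L} (\<lambda>x. v$1 * e_fun mu x + v$2 * w_fun mu x + vc_sol mu f x)"
    by (intro continuous_intros continuous_on_e_fun continuous_on_w_fun continuous_on_vc_sol fa)
  then have cont: "continuous_on {0..L} z"
    by (rule continuous_on_eq) (use z in auto)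
  have "\<forall>x\<in>{0..L}. z x = z 0 + prim f x + integral {0..x} (\<lambda>t. gint L g z - mu * z t)"
    unfolding integral_eq_iff_vc_form[OF fa cont] z0 c using z .
  with zL cont show "shifted_eq L g mu z f"
    unfolding shifted_eq_iff_integral_eq[OF f] by blast
qed

lemma shifted_eq_zero_iff:
  assumes "L > 0" and "L2_on L g"
  shows "shifted_eq L g mu z (\<lambda>_. 0) \<longleftrightarrow>
    (\<exists>v. H_mat L g mu *v v = 0 \<and> (\<forall>x\<in>{0..L}. z x = v$1 * e_fun mu x + v$2 * w_fun mu x))"
proof -
  have "vector [0, - gint L g (\<lambda>_. 0)] = (0 :: complex^2)"
    by (simp add: gint_def vec_eq_iff forall_2)
  then show ?thesis
    unfolding shifted_eq_iff[OF assms L2_on_zero] by simp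
qed

section \<open>Resolvent set and spectrum\<close>

lemma e_fun_w_fun_independent:
  assumes L: "L > 0" and h: "\<forall>x\<in>{0..L}. a * e_fun mu x + c * w_fun mu x = 0"
  shows "a = 0 \<and> c = 0"
proof -
  have a: "a = 0"
    using h[rule_format, of 0] L by simp
  have "c = 0"
  proof (rule ccontr)
    assume "c \<noteq> 0"
    then have "\<And>x. x \<in> {0..L} \<Longrightarrow> w_fun mu x = 0"
      using h a by simp
    then have "(w_fun mu has_vector_derivative 0) (at 0 within {0..L})"
      using L by (intro has_vector_derivative_transform[OF _ _ has_vector_derivative_const]) auto
    moreover have "at 0 within {0..L} \<noteq> bot"
      using L by (simp add: at_within_Icc_at_right)
    ultimately have "e_fun mu 0 = 0"
      using has_vector_derivative_w_fun vector_derivative_unique_within by blast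
    then show False
      by simp
  qed
  with a show ?thesis ..
qed

lemma e_fun_eq_1_iff:
  assumes L: "L > 0"
  shows "e_fun mu L = 1 \<longleftrightarrow> (\<exists>k::int. mu = 2 * \<i> * of_int k * of_real pi / of_real L)"
proof
  assume "e_fun mu L = 1"
  then obtain n :: int where "Re (- mu * complex_of_real L) = 0"
    and "Im (- mu * complex_of_real L) = of_int (2 * n) * pi"
    unfolding e_fun_def exp_eq_1 by blast
  then have "mu = 2 * \<i> * of_int (- n) * of_real pi / of_real L"
    using L by (simp add: complex_eq_iff field_simps)
  then show "\<exists>k::int. mu = 2 * \<i> * of_int k * of_real pi / of_real L" ..
next
  assume "\<exists>k::int. mu = 2 * \<i> * of_int k * of_real pi / of_real L"
  then obtain k :: int where "mu = 2 * \<i> * of_int k * of_real pi / of_real L" ..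
  then have "- mu * complex_of_real L = - (2 * \<i> * of_int k * of_real pi)"
    using L by (simp add: field_simps)
  then show "e_fun mu L = 1"
    unfolding e_fun_def exp_eq_1 by (intro conjI exI[of _ "- k"]) simp_all
qed

lemma det_H_mat:
  "det (H_mat L g mu) = (1 - e_fun mu L) * (gint L g (w_fun mu) - 1) + w_fun mu L * gint L g (e_fun mu)"
  unfolding H_mat_def e_fun_def[abs_def] by (simp add: det_2)

lemma det_H_mat_eq_0_iff:
  assumes L: "L > 0" and g: "L2_on L g"
  shows "det (H_mat L g mu) = 0 \<longleftrightarrow>
    mu \<in> {2 * \<i> * of_int k * of_real pi / of_real L | k :: int. k \<noteq> 0} \<union> {gint L g (\<lambda>_. 1)}"
proof (cases "mu = 0")
  case True
  have "e_fun 0 = (\<lambda>_. 1)"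
    by (simp add: fun_eq_iff e_fun_def)
  then have "det (H_mat L g mu) = of_real L * gint L g (\<lambda>_. 1)"
    using True by (simp add: det_H_mat w_fun_def)
  then show ?thesis
    using True L by auto
next
  case False
  have w: "w_fun mu x = (1 - e_fun mu x) / mu" for x
    using False by (simp add: e_fun_eq)
  have sum: "gint L g (\<lambda>x. 1 + - 1 * e_fun mu x) = gint L g (\<lambda>_. 1) + gint L g (\<lambda>x. - 1 * e_fun mu x)"
    by (rule gint_add[OF g]) (intro continuous_intros continuous_on_e_fun)+
  have "gint L g (w_fun mu) = 1 / mu * gint L g (\<lambda>x. 1 + - 1 * e_fun mu x)"
    unfolding gint_mult[symmetric] using w by (intro gint_cong) simp
  also have "\<dots> = (gint L g (\<lambda>_. 1) - gint L g (e_fun mu)) / mu"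
    unfolding sum gint_mult by (simp add: diff_divide_distrib)
  finally have gw: "gint L g (w_fun mu) = \<dots>" .
  have "det (H_mat L g mu) = (1 - e_fun mu L) * (gint L g (\<lambda>_. 1) - mu) / mu"
    unfolding det_H_mat gw w[of L] using False by (simp add: field_simps)
  then have "det (H_mat L g mu) = 0 \<longleftrightarrow> e_fun mu L = 1 \<or> mu = gint L g (\<lambda>_. 1)"
    using False by auto
  then show ?thesis
    unfolding e_fun_eq_1_iff[OF L] using False by auto
qed

lemma singular_H_mat_imp_not_in_resolvent:
  assumes L: "L > 0" and g: "L2_on L g" and sing: "\<not> invertible (H_mat L g mu)"
  shows "\<not> in_resolvent L g mu"
proof
  obtain v :: "complex^2" where "v \<noteq> 0" and Hv: "H_mat L g mu *v v = 0"
    using sing unfolding invertible_left_inverse matrix_left_invertible_ker by blast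
  define z where "z x = v$1 * e_fun mu x + v$2 * w_fun mu x" for x
  have "shifted_eq L g mu z (\<lambda>_. 0)"
    unfolding shifted_eq_zero_iff[OF L g] using Hv by (auto simp: z_def)
  moreover assume "in_resolvent L g mu"
  ultimately have "\<forall>x\<in>{0..L}. v$1 * e_fun mu x + v$2 * w_fun mu x = 0"
    unfolding in_resolvent_def z_def by blast
  then have "v$1 = 0 \<and> v$2 = 0"
    by (rule e_fun_w_fun_independent[OF L])
  with \<open>v \<noteq> 0\<close> show False
    by (simp add: vec_eq_iff forall_2)
qed

lemma norm_vec2_le: "norm (y :: 'a::real_normed_vector^2) \<le> norm (y$1) + norm (y$2)"
  using L2_set_le_sum[where f = "\<lambda>i. norm (y$i)" and A = UNIV] by (simp add: norm_vec_def sum_2)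

lemma norm_vc_boundary_data_le:
  assumes L: "0 \<le> L" and g: "L2_on L g" and f: "f absolutely_integrable_on {0..L}"
  shows "norm (vector [vc_sol mu f L, - gint L g (vc_sol mu f)] :: complex^2)
    \<le> (1 + cmod mu * exp (2 * cmod mu * L) * L) * integral {0..L} (\<lambda>t. cmod (f t))
      * (1 + integral {0..L} (\<lambda>t. cmod (g t)))"
proof -
  define M where "M = (1 + cmod mu * exp (2 * cmod mu * L) * L) * integral {0..L} (\<lambda>t. cmod (f t))"
  have F: "\<forall>y\<in>{0..L}. cmod (vc_sol mu f y) \<le> M"
    unfolding M_def using norm_vc_sol_le[OF f] by blast
  have "norm (vector [vc_sol mu f L, - gint L g (vc_sol mu f)] :: complex^2)
      \<le> cmod (vc_sol mu f L) + cmod (gint L g (vc_sol mu f))"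
    using norm_vec2_le[of "vector [vc_sol mu f L, - gint L g (vc_sol mu f)] :: complex^2"] by simp
  also have "\<dots> \<le> M + M * integral {0..L} (\<lambda>t. cmod (g t))"
    using F L by (intro add_mono norm_gint_le[OF g continuous_on_vc_sol[OF f]]) auto
  finally show ?thesis
    unfolding M_def by (simp add: algebra_simps)
qed

lemma invertible_H_mat_imp_sup_bound:
  assumes L: "L > 0" and g: "L2_on L g" and inv: "invertible (H_mat L g mu)"
  obtains C where "C \<ge> 0" and "\<And>f z x. L2_on L f \<Longrightarrow> shifted_eq L g mu z f \<Longrightarrow> x \<in> {0..L} \<Longrightarrow>
    cmod (z x) \<le> C * integral {0..L} (\<lambda>t. cmod (f t))"
proof -
  obtain B where B: "B ** H_mat L g mu = mat 1"
    using inv unfolding invertible_def by blast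
  obtain K where K: "\<And>y. norm (B *v y) \<le> norm y * K" and "K > 0"
    using bounded_linear.pos_bounded[OF matrix_vector_mul_bounded_linear[of B]] by blast
  have "bounded (w_fun mu ` {0..L})"
    by (intro compact_imp_bounded compact_continuous_image continuous_on_w_fun compact_Icc)
  then obtain W where "W > 0" and W: "\<And>x. x \<in> {0..L} \<Longrightarrow> cmod (w_fun mu x) \<le> W"
    unfolding bounded_pos by auto
  define E where "E = exp (cmod mu * L)"
  define KF where "KF = 1 + cmod mu * exp (2 * cmod mu * L) * L"
  define G where "G = integral {0..L} (\<lambda>t. cmod (g t))"
  have "G \<ge> 0"
    unfolding G_def using L2_on_imp_absolutely_integrable[OF g] absolutely_integrable_on_def
    by (intro integral_nonneg) auto
  have "KF \<ge> 0"
    unfolding KF_def using L by simp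
  show ?thesis
  proof (rule that[of "K * (1 + G) * KF * (E + W) + KF"])
    show "K * (1 + G) * KF * (E + W) + KF \<ge> 0"
      using \<open>K > 0\<close> \<open>G \<ge> 0\<close> \<open>KF \<ge> 0\<close> \<open>W > 0\<close> by (simp add: E_def)
    fix f z x
    assume f: "L2_on L f" and sh: "shifted_eq L g mu z f" and x: "x \<in> {0..L}"
    have fa: "f absolutely_integrable_on {0..L}"
      by (rule L2_on_imp_absolutely_integrable[OF f])
    define N where "N = integral {0..L} (\<lambda>t. cmod (f t))"
    have "N \<ge> 0"
      unfolding N_def using fa absolutely_integrable_on_def by (intro integral_nonneg) auto
    obtain v where Hv: "H_mat L g mu *v v = vector [vc_sol mu f L, - gint L g (vc_sol mu f)]"
      and z: "\<forall>x\<in>{0..L}. z x = v$1 * e_fun mu x + v$2 * w_fun mu x + vc_sol mu f x"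
      using sh unfolding shifted_eq_iff[OF L g f] by blast
    have "norm (H_mat L g mu *v v) \<le> KF * N * (1 + G)"
      using norm_vc_boundary_data_le[OF _ g fa, of mu] L unfolding Hv KF_def N_def G_def by simp
    moreover have "v = B *v (H_mat L g mu *v v)"
      by (simp add: matrix_vector_mul_assoc B)
    ultimately have v: "norm v \<le> KF * N * (1 + G) * K"
      using K[of "H_mat L g mu *v v"] \<open>K > 0\<close> by (metis mult_right_mono less_imp_le order_trans)
    have "cmod (z x) \<le> cmod (v$1) * cmod (e_fun mu x) + cmod (v$2) * cmod (w_fun mu x) + cmod (vc_sol mu f x)"
      using z x norm_triangle_ineq[of "v$1 * e_fun mu x" "v$2 * w_fun mu x"]
        norm_triangle_ineq[of "v$1 * e_fun mu x + v$2 * w_fun mu x" "vc_sol mu f x"]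
      by (simp add: norm_mult)
    also have "\<dots> \<le> norm v * E + norm v * W + KF * N"
      using x norm_vc_sol_le[OF fa x, of mu] norm_e_fun_le[OF x, of mu] W[OF x]
        Finite_Cartesian_Product.norm_nth_le[of v 1] Finite_Cartesian_Product.norm_nth_le[of v 2]
      by (intro add_mono mult_mono) (auto simp: E_def KF_def N_def)
    also have "\<dots> \<le> KF * N * (1 + G) * K * (E + W) + KF * N"
      using v \<open>W > 0\<close> by (simp add: distrib_left[symmetric] E_def mult_right_mono)
    also have "\<dots> = (K * (1 + G) * KF * (E + W) + KF) * N"
      by (simp add: algebra_simps)
    finally show "cmod (z x) \<le> (K * (1 + G) * KF * (E + W) + KF) * integral {0..L} (\<lambda>t. cmod (f t))"
      unfolding N_def .
  qed
qed

lemma invertible_H_mat_imp_in_resolvent: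
  assumes L: "L > 0" and g: "L2_on L g" and inv: "invertible (H_mat L g mu)"
  shows "in_resolvent L g mu"
  unfolding in_resolvent_def
proof (intro conjI allI impI)
  fix f :: "real \<Rightarrow> complex"
  assume f: "L2_on L f"
  obtain B where B: "H_mat L g mu ** B = mat 1"
    using inv unfolding invertible_def by blast
  define v where "v = B *v vector [vc_sol mu f L, - gint L g (vc_sol mu f)]"
  have "H_mat L g mu *v v = vector [vc_sol mu f L, - gint L g (vc_sol mu f)]"
    by (simp add: v_def matrix_vector_mul_assoc B)
  then have "shifted_eq L g mu (\<lambda>x. v$1 * e_fun mu x + v$2 * w_fun mu x + vc_sol mu f x) f"
    unfolding shifted_eq_iff[OF L g f] by blast
  then show "\<exists>z. shifted_eq L g mu z f"
    by blast
next
  fix z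
  assume "shifted_eq L g mu z (\<lambda>_. 0)"
  then obtain v where "H_mat L g mu *v v = 0" and z: "\<forall>x\<in>{0..L}. z x = v$1 * e_fun mu x + v$2 * w_fun mu x"
    unfolding shifted_eq_zero_iff[OF L g] by blast
  then have "v = 0"
    using inv unfolding invertible_left_inverse matrix_left_invertible_ker by blast
  with z show "\<forall>x\<in>{0..L}. z x = 0"
    by simp
next
  obtain C where "C \<ge> 0" and C: "\<And>f z x. L2_on L f \<Longrightarrow> shifted_eq L g mu z f \<Longrightarrow> x \<in> {0..L} \<Longrightarrow>
      cmod (z x) \<le> C * integral {0..L} (\<lambda>t. cmod (f t))"
    using invertible_H_mat_imp_sup_bound[OF L g inv] by blast
  have "L2_norm_on L z \<le> L * C * L2_norm_on L f"
    if f: "L2_on L f" and sh: "shifted_eq L g mu z f" for z f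
  proof -
    have "L2_norm_on L z \<le> sqrt L * (C * integral {0..L} (\<lambda>t. cmod (f t)))"
      using L C[OF f sh] by (intro L2_norm_on_le_sup) auto
    also have "\<dots> \<le> sqrt L * (C * (sqrt L * L2_norm_on L f))"
      using integral_norm_le_sqrt_mult_L2_norm[OF L f] \<open>C \<ge> 0\<close> L by (intro mult_left_mono) auto
    also have "\<dots> = L * C * L2_norm_on L f"
      using L by (simp add: algebra_simps)
    finally show ?thesis .
  qed
  then show "\<exists>C. \<forall>z f. L2_on L f \<longrightarrow> shifted_eq L g mu z f \<longrightarrow> L2_norm_on L z \<le> C * L2_norm_on L f"
    by blast
qed

theorem proposition8:
  fixes L :: real and g :: "real \<Rightarrow> complex"
  assumes "L > 0" and "L2_on L g"
  shows "(\<forall>mu z. shifted_eq L g mu z (\<lambda>_. 0) \<longleftrightarrow>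
            (\<exists>v :: complex^2. H_mat L g mu *v v = 0 \<and>
               (\<forall>x\<in>{0..L}. z x = v$1 * exp (- mu * complex_of_real x) + v$2 * w_fun mu x)))
       \<and> spectrum_A L g =
           {2 * \<i> * of_int k * of_real pi / of_real L | k :: int. k \<noteq> 0}
           \<union> {gint L g (\<lambda>_. 1)}"
proof
  show "\<forall>mu z. shifted_eq L g mu z (\<lambda>_. 0) \<longleftrightarrow>
      (\<exists>v :: complex^2. H_mat L g mu *v v = 0 \<and>
         (\<forall>x\<in>{0..L}. z x = v$1 * exp (- mu * complex_of_real x) + v$2 * w_fun mu x))"
    using shifted_eq_zero_iff[OF assms] unfolding e_fun_def by blast
  have "in_resolvent L g mu \<longleftrightarrow> det (H_mat L g mu) \<noteq> 0" for mu
    using invertible_H_mat_imp_in_resolvent[OF assms] singular_H_mat_imp_not_in_resolvent[OF assms]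
    unfolding invertible_det_nz by blast
  then have "spectrum_A L g = {mu. det (H_mat L g mu) = 0}"
    unfolding spectrum_A_def by simp
  also have "\<dots> = {2 * \<i> * of_int k * of_real pi / of_real L | k :: int. k \<noteq> 0} \<union> {gint L g (\<lambda>_. 1)}"
    by (rule set_eqI) (simp only: mem_Collect_eq det_H_mat_eq_0_iff[OF assms])
  finally show "spectrum_A L g = \<dots>" .
qed

end
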